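(* If a graph $G$ is $\mathbb{Z}_3$-colorable, then $G$ is 5-degenerate; that is, $\chi_g(G)\leq Col(G)\leq 6$.
   Context: Graphs are finite, may have multiple edges but no loops. For an Abelian group $\Gamma$, $G$ is $\Gamma$-colorable if for some (equivalently, any) orientation $D$ of $G$ and every $\varphi:E(G)\to\Gamma$ there is $c:V(G)\to\Gamma$ with $c(w)-c(u)\neq\varphi(uw)$ for every directed edge $uw$ of $D$. A graph is $d$-degenerate if every subgraph has a vertex of degree at most $d$. The coloring number $Col(G)$ is the smallest $d$ such that $G$ is $(d-1)$-degenerate; equivalently $Col(G)-1$ is the maximum, over all subgraphs of $G$, of the minimum degree. The group chromatic number $\chi_g(G)$ is the smallest $k$ such that $G$ is $\Gamma$-colorable for every Abelian group $\Gamma$ of order at least $k$. *)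

theory Defs
  imports Main "HOL-Library.Numeral_Type"
begin

text \<open>A finite loopless multigraph: vertex set V, edge set E (edge identities, so
parallel edges are allowed), and ends e = the 2-element set of endpoints of e.\<close>
definition multigraph :: "'v set \<Rightarrow> 'e set \<Rightarrow> ('e \<Rightarrow> 'v set) \<Rightarrow> bool" where
  "multigraph V E ends \<longleftrightarrow> finite V \<and> finite E \<and>
     (\<forall>e\<in>E. ends e \<subseteq> V \<and> card (ends e) = 2)"

definition orientation :: "'e set \<Rightarrow> ('e \<Rightarrow> 'v set) \<Rightarrow> ('e \<Rightarrow> 'v) \<Rightarrow> bool" where
  "orientation E ends tail \<longleftrightarrow> (\<forall>e\<in>E. tail e \<in> ends e)"

definition head :: "('e \<Rightarrow> 'v set) \<Rightarrow> ('e \<Rightarrow> 'v) \<Rightarrow> 'e \<Rightarrow> 'v" where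
  "head ends tail e = (THE w. w \<in> ends e \<and> w \<noteq> tail e)"

definition group_colorable ::
  "'g::ab_group_add itself \<Rightarrow> 'v set \<Rightarrow> 'e set \<Rightarrow> ('e \<Rightarrow> 'v set) \<Rightarrow> bool" where
  "group_colorable _ V E ends \<longleftrightarrow>
     (\<exists>tail. orientation E ends tail \<and>
       (\<forall>\<phi> :: 'e \<Rightarrow> 'g. \<exists>c :: 'v \<Rightarrow> 'g.
          \<forall>e\<in>E. c (head ends tail e) - c (tail e) \<noteq> \<phi> e))"

definition degree_in :: "'e set \<Rightarrow> ('e \<Rightarrow> 'v set) \<Rightarrow> 'v \<Rightarrow> nat" where
  "degree_in E ends v = card {e\<in>E. v \<in> ends e}"

definition degenerate :: "'v set \<Rightarrow> 'e set \<Rightarrow> ('e \<Rightarrow> 'v set) \<Rightarrow> nat \<Rightarrow> bool" where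
  "degenerate V E ends d \<longleftrightarrow>
     (\<forall>V' E'. V' \<subseteq> V \<and> V' \<noteq> {} \<and> E' \<subseteq> E \<and> (\<forall>e\<in>E'. ends e \<subseteq> V') \<longrightarrow>
        (\<exists>v\<in>V'. degree_in E' ends v \<le> d))"

end

theory Submission
  imports Defs "HOL-Library.FuncSet"
begin

text \<open>Let \<open>H\<close> be a subgraph with \<open>n\<close> vertices, \<open>m\<close> edges and minimum degree at least 6,
so \<open>m \<ge> 3n\<close>. Every \<open>\<phi> : E(H) \<rightarrow> \<int>\<^sub>3\<close> is avoided by one of the \<open>3\<^sup>n\<close> colourings of \<open>V(H)\<close>,
and each colouring avoids only \<open>2\<^sup>m\<close> of the \<open>3\<^sup>m\<close> functions \<open>\<phi>\<close>. Hence
\<open>3\<^sup>m \<le> 3\<^sup>n 2\<^sup>m\<close>, impossible for \<open>n \<ge> 1\<close> because \<open>(3/2)\<^sup>3 = 27/8 > 3\<close>.\<close>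

lemma sum_degree_in_eq_sum_card_ends:
  assumes "finite V" "finite E" "\<forall>e\<in>E. ends e \<subseteq> V"
  shows "(\<Sum>v\<in>V. degree_in E ends v) = (\<Sum>e\<in>E. card (ends e))"
proof -
  have "(\<Sum>v\<in>V. degree_in E ends v) = (\<Sum>v\<in>V. \<Sum>e\<in>E. if v \<in> ends e then 1 else 0)"
    unfolding degree_in_def using assms(2)
    by (intro sum.cong refl) (simp add: sum.If_cases Collect_conj_eq)
  also have "\<dots> = (\<Sum>e\<in>E. \<Sum>v\<in>V. if v \<in> ends e then 1 else 0)"
    by (rule sum.swap)
  also have "\<dots> = (\<Sum>e\<in>E. card (ends e))"
  proof (rule sum.cong[OF refl])
    fix e assume "e \<in> E"
    then have "V \<inter> ends e = ends e" using assms(3) by blast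
    then show "(\<Sum>v\<in>V. if v \<in> ends e then 1 else 0) = card (ends e)"
      using assms(1) by (simp add: sum.If_cases Int_commute)
  qed
  finally show ?thesis .
qed

lemma multigraph_min_degree_card_edges:
  assumes "multigraph V E ends" and "\<forall>v\<in>V. d \<le> degree_in E ends v"
  shows "d * card V \<le> 2 * card E"
proof -
  have "d * card V \<le> (\<Sum>v\<in>V. degree_in E ends v)"
    using sum_mono[of V "\<lambda>_. d"] assms(2) by (simp add: mult.commute)
  also have "\<dots> = (\<Sum>e\<in>E. card (ends e))"
    using assms(1) by (simp add: multigraph_def sum_degree_in_eq_sum_card_ends)
  also have "\<dots> = 2 * card E"
    using assms(1) by (simp add: multigraph_def)
  finally show ?thesis .
qed

lemma multigraph_subgraph:
  assumes "multigraph V E ends" "V' \<subseteq> V" "E' \<subseteq> E" "\<forall>e\<in>E'. ends e \<subseteq> V'"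
  shows "multigraph V' E' ends"
  using assms unfolding multigraph_def by (auto intro: finite_subset)

lemma group_colorable_subgraph:
  assumes "group_colorable TYPE('g::ab_group_add) V E ends" "E' \<subseteq> E"
  shows "group_colorable TYPE('g) V' E' ends"
  using assms unfolding group_colorable_def orientation_def by blast

lemma head_in_ends:
  assumes "card (ends e) = 2" "tail e \<in> ends e"
  shows "head ends tail e \<in> ends e"
proof -
  obtain a b where "a \<noteq> b" "ends e = {a, b}"
    using assms(1) by (auto simp: card_Suc_eq numeral_2_eq_2)
  then have "\<exists>!w. w \<in> ends e \<and> w \<noteq> tail e" using assms(2) by auto
  then show ?thesis unfolding head_def by (metis (mono_tags, lifting) theI')
qed

lemma group_colorable_card_bound:
  fixes V :: "'v set" and E :: "'e set"
  assumes "multigraph V E ends" "group_colorable TYPE('g::{ab_group_add, finite}) V E ends"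
  shows "CARD('g) ^ card E \<le> CARD('g) ^ card V * (CARD('g) - 1) ^ card E"
proof -
  obtain tail where tail: "orientation E ends tail" and colorable:
    "\<forall>\<phi> :: 'e \<Rightarrow> 'g. \<exists>c :: 'v \<Rightarrow> 'g. \<forall>e\<in>E. c (head ends tail e) - c (tail e) \<noteq> \<phi> e"
    using assms(2) unfolding group_colorable_def by blast
  have fin: "finite V" "finite E" and ends: "\<forall>e\<in>E. card (ends e) = 2 \<and> ends e \<subseteq> V"
    using assms(1) unfolding multigraph_def by auto
  have endpoints_in_V: "head ends tail e \<in> V" "tail e \<in> V" if "e \<in> E" for e
    using head_in_ends[of ends e tail] ends tail that unfolding orientation_def by blast+
  define avoided_by :: "('v \<Rightarrow> 'g) \<Rightarrow> ('e \<Rightarrow> 'g) set" where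
    "avoided_by c = (\<Pi>\<^sub>E e\<in>E. UNIV - {c (head ends tail e) - c (tail e)})" for c
  let ?C = "V \<rightarrow>\<^sub>E (UNIV :: 'g set)"
  have cover: "E \<rightarrow>\<^sub>E UNIV \<subseteq> (\<Union>c\<in>?C. avoided_by c)"
  proof
    fix \<phi> :: "'e \<Rightarrow> 'g" assume \<phi>: "\<phi> \<in> E \<rightarrow>\<^sub>E UNIV"
    obtain c where "\<forall>e\<in>E. c (head ends tail e) - c (tail e) \<noteq> \<phi> e"
      using colorable by blast
    then have "\<phi> \<in> avoided_by (restrict c V)"
      using \<phi> endpoints_in_V unfolding avoided_by_def by (auto simp: PiE_iff)
    moreover have "restrict c V \<in> ?C" by simp
    ultimately show "\<phi> \<in> (\<Union>c\<in>?C. avoided_by c)" by blast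
  qed
  have "CARD('g) ^ card E = card (E \<rightarrow>\<^sub>E (UNIV :: 'g set))"
    using fin by (simp add: card_PiE)
  also have "\<dots> \<le> card (\<Union>c\<in>?C. avoided_by c)"
    using cover fin by (intro card_mono) (auto simp: avoided_by_def intro!: finite_PiE)
  also have "\<dots> \<le> (\<Sum>c\<in>?C. card (avoided_by c))"
    using fin by (intro card_UN_le finite_PiE) auto
  also have "\<dots> = (\<Sum>c\<in>?C. (CARD('g) - 1) ^ card E)"
    using fin by (intro sum.cong refl) (simp add: avoided_by_def card_PiE card_Diff_singleton)
  also have "\<dots> = CARD('g) ^ card V * (CARD('g) - 1) ^ card E"
    using fin by (simp add: card_PiE)
  finally show ?thesis .
qed

lemma three_pow_gt:
  assumes "1 \<le> n" "3 * n \<le> m"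
  shows "3 ^ n * 2 ^ m < (3 :: nat) ^ m"
proof -
  obtain k where k: "m = 3 * n + k" using assms(2) le_Suc_ex by blast
  have "(24::nat) ^ n * 2 ^ k < 27 ^ n * 3 ^ k"
    using assms(1) by (intro mult_less_le_imp_less power_strict_mono power_mono) simp_all
  moreover have "(3::nat) ^ n * 2 ^ m = 24 ^ n * 2 ^ k"
    by (simp add: k power_add power_mult flip: power_mult_distrib)
  moreover have "(3::nat) ^ m = 27 ^ n * 3 ^ k"
    by (simp add: k power_add power_mult)
  ultimately show ?thesis by simp
qed

theorem proposition7p6:
  fixes V :: "'v set" and E :: "'e set" and ends :: "'e \<Rightarrow> 'v set"
  assumes "multigraph V E ends"
    and "group_colorable TYPE(3) V E ends"
  shows "degenerate V E ends 5"
  unfolding degenerate_def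
proof (intro allI impI)
  fix V' E' assume sub: "V' \<subseteq> V \<and> V' \<noteq> {} \<and> E' \<subseteq> E \<and> (\<forall>e\<in>E'. ends e \<subseteq> V')"
  show "\<exists>v\<in>V'. degree_in E' ends v \<le> 5"
  proof (rule ccontr)
    assume "\<not> ?thesis"
    then have min_degree: "\<forall>v\<in>V'. 6 \<le> degree_in E' ends v" by auto
    have H: "multigraph V' E' ends"
      using multigraph_subgraph assms(1) sub by blast
    have "group_colorable TYPE(3) V' E' ends"
      using group_colorable_subgraph assms(2) sub by blast
    then have "3 ^ card E' \<le> 3 ^ card V' * (2::nat) ^ card E'"
      using group_colorable_card_bound[OF H] by fastforce
    moreover have "1 \<le> card V'"
      using H sub by (simp add: multigraph_def Suc_le_eq card_gt_0_iff)
    moreover have "3 * card V' \<le> card E'"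
      using multigraph_min_degree_card_edges[OF H min_degree] by simp
    ultimately show False
      using three_pow_gt by (simp add: not_le[symmetric])
  qed
qed

end
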